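(* If $x=re^{i\theta}\in C$ and $M_x$ is minimal in the sphere $S^{n+1}(r)$, then $$\|A^E(x)\|^2=\frac{ng}{r^2},\qquad \|A^S(x)\|^2=\frac{n}{r^2}(g-1).$$
   Context: Let $M^n$ be a compact isoparametric hypersurface in the unit sphere $S^{n+1}\subset\mathbb{R}^{n+2}$ (constant principal curvatures) with $g$ distinct principal curvatures; then $g\in\{1,2,3,4,6\}$. Fix $x_0\in M$ and identify the 2-dimensional normal space $\nu_{x_0}M$ of $M$ in $\mathbb{R}^{n+2}$ with $\mathbb{C}$ so that the two focal submanifolds $M_+$, $M_-$ ($\dim M_+\le\dim M_-$) meet the normal circle at $1$ and $e^{i\pi/g}$ (the intersection points closest to $x_0$). The Weyl chamber is $C=\{re^{i\theta}:r>0,\ 0<\theta<\pi/g\}$. For $k=1,\dots,g$ let $\theta_k=k\pi/g-\pi/2$, $\alpha_k=e^{i\theta_k}$, and $m_k=m_1$ for $k$ odd, $m_k=m_2$ for $k$ even, where $(m_1,m_2)$, $m_1\le m_2$, is the multiplicity data of the principal curvatures; $m_1=m_2$ if $g$ is odd, and $(m_1+m_2)g=2n$. For $x\in C$, $M_x=\{p+\tilde\xi(p):p\in M\}$ where $\tilde\xi$ is the parallel normal field on $M$ with $\tilde\xi(x_0)=x-x_0$; it is an $n$-dimensional isoparametric submanifold of $\mathbb{R}^{n+2}$ lying in $S^{n+1}(|x|)$, with normal space $\nu_{x_0}M$ at $x$, and $T_xM_x=\oplus_kE_k$, $\dim E_k=m_k$, with Euclidean shape operator $A_\xi|_{E_k}=\langle\xi,-\alpha_k/\langle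 x,\alpha_k\rangle\rangle\mathrm{Id}$ ($\langle\cdot,\cdot\rangle$ the real inner product on $\mathbb{C}=\mathbb{R}^2$). $H^E(x),A^E(x)$ denote mean curvature vector and shape operator of $M_x$ at $x$ in $\mathbb{R}^{n+2}$; $H^S(x),A^S(x)$ those of $M_x$ as a hypersurface of $S^{n+1}(|x|)$; $\|A\|^2$ is the sum of squared Hilbert–Schmidt norms over an orthonormal normal basis. Set $\delta=(m_2-m_1)/(m_2+m_1)$ if $g\ge2$ and $\delta=0$ if $g=1$, and let $\theta_{\min}\in(0,\pi/g)$ be defined by $\cos g\theta_{\min}=-\delta$. *)

theory Defs
  imports "HOL-Analysis.Analysis"
begin

text \<open>The normal plane of M at x0 is identified with the complex plane;
  the real inner product on it is the inner product of type complex.\<close>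

definition alpha :: "nat \<Rightarrow> nat \<Rightarrow> complex" where
  "alpha g k = cis (real k * pi / real g - pi / 2)"

definition mult :: "nat \<Rightarrow> nat \<Rightarrow> nat \<Rightarrow> nat" where
  "mult m1 m2 k = (if odd k then m1 else m2)"

definition weyl_chamber :: "nat \<Rightarrow> complex set" where
  "weyl_chamber g = {rcis r t | r t. r > 0 \<and> 0 < t \<and> t < pi / real g}"

text \<open>Eigenvalue of the Euclidean shape operator A_xi of M_x on E_k.\<close>
definition shape_eig :: "nat \<Rightarrow> complex \<Rightarrow> complex \<Rightarrow> nat \<Rightarrow> real" where
  "shape_eig g x \<xi> k = \<xi> \<bullet> (- alpha g k / complex_of_real (x \<bullet> alpha g k))"

text \<open>Squared Hilbert-Schmidt norm of A_xi on T_x M_x = direct sum of E_k, dim E_k = m_k.\<close>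
definition hs_sq :: "nat \<Rightarrow> nat \<Rightarrow> nat \<Rightarrow> complex \<Rightarrow> complex \<Rightarrow> real" where
  "hs_sq g m1 m2 x \<xi> = (\<Sum>k=1..g. real (mult m1 m2 k) * (shape_eig g x \<xi> k)^2)"

definition shape_trace :: "nat \<Rightarrow> nat \<Rightarrow> nat \<Rightarrow> complex \<Rightarrow> complex \<Rightarrow> real" where
  "shape_trace g m1 m2 x \<xi> = (\<Sum>k=1..g. real (mult m1 m2 k) * shape_eig g x \<xi> k)"

definition dimM :: "nat \<Rightarrow> nat \<Rightarrow> nat \<Rightarrow> nat" where
  "dimM g m1 m2 = (\<Sum>k=1..g. mult m1 m2 k)"

text \<open>||A^E(x)||^2: sum over an orthonormal basis of the normal space nu (= C).\<close>
definition normsq_AE :: "nat \<Rightarrow> nat \<Rightarrow> nat \<Rightarrow> complex \<Rightarrow> real" where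
  "normsq_AE g m1 m2 x = (\<Sum>\<xi>\<in>Basis. hs_sq g m1 m2 x \<xi>)"

text \<open>Unit normal of M_x in the sphere S^{n+1}(|x|) at x: the unit vector of nu orthogonal to x.
  The shape operator of M_x in the sphere w.r.t. this normal equals the Euclidean A_eta.\<close>
definition sphere_normal :: "complex \<Rightarrow> complex" where
  "sphere_normal x = \<i> * x / complex_of_real (cmod x)"

definition normsq_AS :: "nat \<Rightarrow> nat \<Rightarrow> nat \<Rightarrow> complex \<Rightarrow> real" where
  "normsq_AS g m1 m2 x = hs_sq g m1 m2 x (sphere_normal x)"

definition mean_curv_S :: "nat \<Rightarrow> nat \<Rightarrow> nat \<Rightarrow> complex \<Rightarrow> complex" where
  "mean_curv_S g m1 m2 x =
     complex_of_real (shape_trace g m1 m2 x (sphere_normal x) / real (dimM g m1 m2)) * sphere_normal x"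

end

theory Submission
  imports Defs
begin

text \<open>For x = rcis rho t in the Weyl chamber, x \<bullet> alpha_k = rho cos phi_k with phi_k = t - theta_k.
  The principal curvatures of M_x in the sphere are tan phi_k / rho, and E_k contributes
  m_k (1 + tan^2 phi_k) / rho^2 to the Euclidean norm, so everything reduces to computing
  sum m_k tan^2 phi_k under the minimality condition sum m_k tan phi_k = 0.
  The angles phi_k form one family (g odd) or two interleaved families (g even) of h equally
  spaced angles modulo pi; over such a family sum tan = h tan beta and
  sum tan^2 = h^2 tan^2 beta + h (h - 1), beta being essentially the h-fold angle.
  Minimality forces tan beta = 0 for g odd, and m_2 tan^2 beta = m_1 for g even, where the
  second family has tan beta replaced by -1 / tan beta; either way sum m_k tan^2 phi_k = n (g - 1).\<close>

lemma tan_add_pi_half: "tan (x + pi/2) = - 1 / tan x"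
  by (simp add: tan_def sin_add cos_add)

lemma sin_treble: "sin (3 * x) = 3 * sin x - 4 * sin x ^ 3" for x :: real
proof -
  have "sin (3 * x) = sin (2 * x + x)" by (simp add: algebra_simps)
  also have "\<dots> = 3 * sin x - 4 * sin x ^ 3"
    unfolding sin_add sin_double cos_double using sin_cos_squared_add[of x] by algebra
  finally show ?thesis .
qed

lemma tan_sum_pair:
  fixes y :: real
  assumes c: "cos y \<noteq> 0" and s: "sin y \<noteq> 0"
  shows "cos (2*y + pi/2) \<noteq> 0"
    and "tan (y - pi/2) + tan (y - pi) = 2 * tan (2*y + pi/2)"
    and "tan (y - pi/2)^2 + tan (y - pi)^2 = 4 * tan (2*y + pi/2)^2 + 2"
proof -
  have t1: "tan (y - pi/2) = - cos y / sin y" by (simp add: tan_def sin_diff cos_diff)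
  have t2: "tan (y - pi) = sin y / cos y" by (simp add: tan_def sin_diff cos_diff)
  have cb: "cos (2*y + pi/2) = - 2 * sin y * cos y" by (simp add: cos_add sin_double)
  have tb: "tan (2*y + pi/2) = (cos y ^ 2 - sin y ^ 2) / (- 2 * sin y * cos y)"
    by (simp add: tan_def sin_add cos_add sin_double cos_double)
  show "cos (2*y + pi/2) \<noteq> 0" unfolding cb using c s by simp
  show "tan (y - pi/2) + tan (y - pi) = 2 * tan (2*y + pi/2)"
    unfolding t1 t2 tb using c s by (simp add: field_simps power2_eq_square)
  show "tan (y - pi/2)^2 + tan (y - pi)^2 = 4 * tan (2*y + pi/2)^2 + 2"
    unfolding t1 t2 tb by (simp add: field_simps c s, algebra)
qed

lemma tan_sum_triple:
  fixes y :: real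
  assumes "cos y \<noteq> 0" and "cos (y - pi/3) \<noteq> 0" and "cos (y - 2*pi/3) \<noteq> 0"
  shows "cos (3*y + pi) \<noteq> 0"
    and "tan (y - pi/3) + tan (y - 2*pi/3) + tan (y - pi) = 3 * tan (3*y + pi)"
    and "tan (y - pi/3)^2 + tan (y - 2*pi/3)^2 + tan (y - pi)^2 = 9 * tan (3*y + pi)^2 + 6"
proof -
  define s where "s = sin y"
  define c where "c = cos y"
  define q where "q = sqrt (3::real)"
  define u where "u = c + q * s"
  define v where "v = q * s - c"
  have sc: "s^2 + c^2 = 1" and q: "q^2 = 3" by (simp_all add: s_def c_def q_def)
  have cs23: "cos (2*pi/3) = - 1/2" "sin (2*pi/3) = sqrt 3 / 2"
  proof -
    have e: "2*pi/3 = pi - pi/3" by simp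
    show "cos (2*pi/3) = - 1/2" "sin (2*pi/3) = sqrt 3 / 2"
      by (simp_all only: e cos_pi_minus sin_pi_minus cos_60 sin_60)
  qed
  have cos1: "cos (y - pi/3) = u/2" and sin1: "sin (y - pi/3) = (s - q * c)/2"
    unfolding cos_diff sin_diff cos_60 sin_60 u_def s_def c_def q_def by (simp_all add: field_simps)
  have cos2: "cos (y - 2*pi/3) = v/2" and sin2: "sin (y - 2*pi/3) = (- s - q * c)/2"
    unfolding cos_diff sin_diff cs23 v_def s_def c_def q_def by (simp_all add: field_simps)
  have tan1: "tan (y - pi/3) = (s - q * c)/u"
    unfolding tan_def cos1 sin1 by (simp add: divide_simps)
  have tan2: "tan (y - 2*pi/3) = (- s - q * c)/v"
    unfolding tan_def cos2 sin2 by (simp add: divide_simps)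
  have tan0: "tan (y - pi) = s/c" by (simp add: s_def c_def tan_def sin_diff cos_diff)
  have cos3: "cos (3*y) = - c * u * v"
    unfolding cos_treble_cos c_def[symmetric] u_def v_def using sc q by algebra
  have sin3: "sin (3*y) = s * (3 - 4 * s^2)"
    unfolding sin_treble s_def by (simp add: power3_eq_cube power2_eq_square algebra_simps)
  have cos3pi: "cos (3*y + pi) = c * u * v" and tan3pi: "tan (3*y + pi) = s * (3 - 4 * s^2)/(- c * u * v)"
    unfolding tan_def sin_periodic_pi cos_periodic_pi sin3 cos3 by simp_all
  have nz: "c \<noteq> 0" "u \<noteq> 0" "v \<noteq> 0" using assms cos1 cos2 by (simp_all add: c_def)
  show "cos (3*y + pi) \<noteq> 0" unfolding cos3pi using nz by simp
  show "tan (y - pi/3) + tan (y - 2*pi/3) + tan (y - pi) = 3 * tan (3*y + pi)"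
    unfolding tan0 tan1 tan2 tan3pi
    by (simp add: field_simps nz) (use sc q u_def v_def in algebra)
  show "tan (y - pi/3)^2 + tan (y - 2*pi/3)^2 + tan (y - pi)^2 = 9 * tan (3*y + pi)^2 + 6"
    unfolding tan0 tan1 tan2 tan3pi
    by (simp add: field_simps nz) (use sc q u_def v_def in algebra)
qed

text \<open>These identities hold for every h; the cases h <= 3 are all that g in {1, 2, 3, 4, 6} needs.\<close>

lemma tan_sum_equally_spaced:
  fixes h :: nat and y :: real
  assumes h: "h \<in> {1, 2, 3}"
    and cos_nz: "\<And>j. j \<in> {1..h} \<Longrightarrow> cos (y - real j * pi / real h) \<noteq> 0"
  defines "\<beta> \<equiv> real h * y + (real h - 1) * pi / 2"
  shows "cos \<beta> \<noteq> 0"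
    and "(\<Sum>j=1..h. tan (y - real j * pi / real h)) = real h * tan \<beta>"
    and "(\<Sum>j=1..h. tan (y - real j * pi / real h) ^ 2) = real h ^ 2 * tan \<beta> ^ 2 + real h * (real h - 1)"
proof -
  from h consider "h = 1" | "h = 2" | "h = 3" by auto
  hence "cos \<beta> \<noteq> 0 \<and> (\<Sum>j=1..h. tan (y - real j * pi / real h)) = real h * tan \<beta>
    \<and> (\<Sum>j=1..h. tan (y - real j * pi / real h) ^ 2) = real h ^ 2 * tan \<beta> ^ 2 + real h * (real h - 1)"
  proof cases
    case 1
    have "cos y \<noteq> 0" using cos_nz[of 1] 1 by (simp add: cos_diff)
    then show ?thesis using 1 by (simp add: \<beta>_def tan_def sin_diff cos_diff)
  next
    case 2
    have "cos y \<noteq> 0" "sin y \<noteq> 0" using cos_nz[of 1] cos_nz[of 2] 2 by (simp_all add: cos_diff)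
    from tan_sum_pair[OF this] show ?thesis
      using 2 by (simp add: \<beta>_def numeral_2_eq_2 power2_eq_square)
  next
    case 3
    have "cos y \<noteq> 0" "cos (y - pi/3) \<noteq> 0" "cos (y - 2*pi/3) \<noteq> 0"
      using cos_nz[of 1] cos_nz[of 2] cos_nz[of 3] 3 by (simp_all add: cos_diff)
    from tan_sum_triple[OF this] show ?thesis
      using 3 by (simp add: \<beta>_def numeral_3_eq_3 power2_eq_square)
  qed
  thus "cos \<beta> \<noteq> 0" "(\<Sum>j=1..h. tan (y - real j * pi / real h)) = real h * tan \<beta>"
    "(\<Sum>j=1..h. tan (y - real j * pi / real h) ^ 2) = real h ^ 2 * tan \<beta> ^ 2 + real h * (real h - 1)"
    by auto
qed

lemma sum_mult_double:
  fixes f :: "nat \<Rightarrow> 'a::comm_semiring_1"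
  shows "(\<Sum>k=1..2*h. of_nat (mult m1 m2 k) * f k)
    = of_nat m1 * (\<Sum>j=1..h. f (2*j - 1)) + of_nat m2 * (\<Sum>j=1..h. f (2*j))"
proof (induction h)
  case (Suc h)
  have "{1..2 * Suc h} = insert (2*h + 2) (insert (2*h + 1) {1..2*h})" by auto
  then show ?case using Suc by (simp add: mult_def distrib_left add_ac)
qed simp

lemma dimM_double:
  assumes "odd g \<Longrightarrow> m1 = m2"
  shows "2 * dimM g m1 m2 = (m1 + m2) * g"
proof (cases "even g")
  case True
  then obtain h where "g = 2*h" by blast
  then show ?thesis
    using sum_mult_double[where f = "\<lambda>_. 1 :: nat" and h = h] by (simp add: dimM_def algebra_simps)
next
  case False
  then show ?thesis using assms by (simp add: dimM_def mult_def)
qed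

definition alpha_angle :: "nat \<Rightarrow> real \<Rightarrow> nat \<Rightarrow> real" where
  "alpha_angle g t k = t - (real k * pi / real g - pi / 2)"

lemma cos_alpha_angle_pos:
  assumes "1 \<le> k" "k \<le> g" "0 < t" "t < pi / real g"
  shows "0 < cos (alpha_angle g t k)"
proof (rule cos_gt_zero_pi)
  have g: "real g > 0" using assms by simp
  have "real k * pi / real g \<le> pi" using assms g by (simp add: field_simps)
  thus "- (pi / 2) < alpha_angle g t k" using assms by (simp add: alpha_angle_def)
  have "pi / real g \<le> real k * pi / real g" using assms g by (simp add: field_simps)
  thus "alpha_angle g t k < pi / 2" using assms unfolding alpha_angle_def by linarith
qed

lemma weighted_tan_sq_sum_odd:
  fixes g m :: nat and t :: real
  assumes g: "g \<in> {1, 3}" and m: "m \<noteq> 0"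
    and cos_nz: "\<And>k. k \<in> {1..g} \<Longrightarrow> cos (alpha_angle g t k) \<noteq> 0"
    and balanced: "(\<Sum>k=1..g. real (mult m m k) * tan (alpha_angle g t k)) = 0"
  shows "(\<Sum>k=1..g. real (mult m m k) * tan (alpha_angle g t k) ^ 2) = real m * real g * (real g - 1)"
proof -
  define y where "y = t + pi/2"
  define \<beta> where "\<beta> = real g * y + (real g - 1) * pi / 2"
  have angle: "alpha_angle g t k = y - real k * pi / real g" for k
    by (simp add: alpha_angle_def y_def)
  have "g \<in> {1, 2, 3}" using g by auto
  note spaced = tan_sum_equally_spaced[OF this, of y, folded \<beta>_def angle, OF cos_nz]
  have "real m * (\<Sum>k=1..g. tan (alpha_angle g t k)) = 0"
    using balanced by (simp add: mult_def flip: sum_distrib_left)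
  hence "tan \<beta> = 0" using m g spaced(2) by auto
  hence "(\<Sum>k=1..g. tan (alpha_angle g t k) ^ 2) = real g * (real g - 1)"
    using spaced(3) by simp
  then show ?thesis by (simp add: mult_def flip: sum_distrib_left)
qed

lemma alpha_angle_double_even:
  "alpha_angle (2*h) t (2*j) = (t + pi/2) - real j * pi / real h"
  by (simp add: alpha_angle_def)

lemma alpha_angle_double_odd:
  assumes "1 \<le> j"
  shows "alpha_angle (2*h) t (2*j - 1) = (t + pi/2 + pi / (2 * real h)) - real j * pi / real h"
  using assms by (cases "h = 0") (simp_all add: alpha_angle_def of_nat_diff field_simps)

lemma sum_mult_alpha_angle_double:
  fixes F :: "real \<Rightarrow> real"
  shows "(\<Sum>k=1..2*h. real (mult m1 m2 k) * F (alpha_angle (2*h) t k))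
    = real m1 * (\<Sum>j=1..h. F ((t + pi/2 + pi / (2 * real h)) - real j * pi / real h))
      + real m2 * (\<Sum>j=1..h. F ((t + pi/2) - real j * pi / real h))"
proof -
  have "(\<Sum>j=1..h. F (alpha_angle (2*h) t (2*j - 1)))
      = (\<Sum>j=1..h. F ((t + pi/2 + pi / (2 * real h)) - real j * pi / real h))"
    by (rule sum.cong[OF refl], rule arg_cong[where f = F], rule alpha_angle_double_odd) simp
  then show ?thesis unfolding sum_mult_double alpha_angle_double_even by simp
qed

lemma weighted_tan_sq_sum_even:
  fixes h m1 m2 :: nat and t :: real
  assumes h: "h \<in> {1, 2, 3}"
    and cos_nz: "\<And>k. k \<in> {1..2*h} \<Longrightarrow> cos (alpha_angle (2*h) t k) \<noteq> 0"
    and balanced: "(\<Sum>k=1..2*h. real (mult m1 m2 k) * tan (alpha_angle (2*h) t k)) = 0"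
  shows "(\<Sum>k=1..2*h. real (mult m1 m2 k) * tan (alpha_angle (2*h) t k) ^ 2)
    = real (m1 + m2) * real h * (2 * real h - 1)"
proof -
  define y where "y = t + pi/2"
  define y' where "y' = y + pi / (2 * real h)"
  define \<beta> where "\<beta> = real h * y + (real h - 1) * pi / 2"
  have h0: "real h > 0" using h by auto
  \<comment> \<open>the odd family is the even one rotated by pi/g, turning tan beta into -1 / tan beta\<close>
  have shift: "real h * y' + (real h - 1) * pi / 2 = \<beta> + pi/2"
    using h0 by (simp add: \<beta>_def y_def y'_def field_simps)
  note even = tan_sum_equally_spaced[OF h, of y, folded \<beta>_def]
  note odd = tan_sum_equally_spaced[OF h, of y', unfolded shift]
  note split = sum_mult_alpha_angle_double[where t = t and h = h, folded y_def, folded y'_def]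
  have even_cos: "cos (y - real j * pi / real h) \<noteq> 0" if "j \<in> {1..h}" for j
    using cos_nz[of "2*j"] that by (simp add: alpha_angle_double_even y_def)
  have odd_cos: "cos (y' - real j * pi / real h) \<noteq> 0" if "j \<in> {1..h}" for j
  proof -
    have "1 \<le> j" "2*j - 1 \<in> {1..2*h}" using that by auto
    then show ?thesis using cos_nz alpha_angle_double_odd[of j h t] unfolding y'_def y_def by metis
  qed
  have "sin \<beta> \<noteq> 0" using odd(1)[OF odd_cos] by (simp add: cos_add)
  hence tan_nz: "tan \<beta> \<noteq> 0" using even(1)[OF even_cos] by (simp add: tan_def)
  have "(\<Sum>k=1..2*h. real (mult m1 m2 k) * tan (alpha_angle (2*h) t k))
    = real m1 * (real h * tan (\<beta> + pi/2)) + real m2 * (real h * tan \<beta>)"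
    using even(2)[OF even_cos] odd(2)[OF odd_cos] by (simp only: split[where F = tan])
  hence "real h * (real m2 * tan \<beta> - real m1 / tan \<beta>) = 0"
    using balanced unfolding tan_add_pi_half by (simp add: algebra_simps)
  hence m1_eq: "real m2 * tan \<beta> ^ 2 = real m1" using h0 tan_nz by (simp add: field_simps power2_eq_square)
  hence m2_eq: "real m1 / tan \<beta> ^ 2 = real m2" using tan_nz by (simp add: field_simps)
  have "(\<Sum>k=1..2*h. real (mult m1 m2 k) * tan (alpha_angle (2*h) t k) ^ 2)
    = real m1 * (real h ^ 2 * tan (\<beta> + pi/2) ^ 2 + real h * (real h - 1))
      + real m2 * (real h ^ 2 * tan \<beta> ^ 2 + real h * (real h - 1))"
    using even(3)[OF even_cos] odd(3)[OF odd_cos] by (simp only: split[where F = "\<lambda>x. tan x ^ 2"])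
  also have "\<dots> = real h ^ 2 * (real m1 / tan \<beta> ^ 2) + real h ^ 2 * (real m2 * tan \<beta> ^ 2)
      + real (m1 + m2) * real h * (real h - 1)"
    unfolding tan_add_pi_half by (simp add: power_divide algebra_simps)
  also have "\<dots> = real (m1 + m2) * real h * (2 * real h - 1)"
    unfolding m1_eq m2_eq by (simp add: algebra_simps power2_eq_square)
  finally show ?thesis .
qed

lemma weighted_tan_sq_sum:
  fixes g m1 m2 n :: nat and t :: real
  assumes g: "g \<in> {1, 2, 3, 4, 6}" and m1: "m1 \<noteq> 0" and odd: "odd g \<Longrightarrow> m1 = m2"
    and dim: "(m1 + m2) * g = 2 * n" and t: "0 < t" "t < pi / real g"
    and balanced: "(\<Sum>k=1..g. real (mult m1 m2 k) * tan (alpha_angle g t k)) = 0"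
  shows "(\<Sum>k=1..g. real (mult m1 m2 k) * tan (alpha_angle g t k) ^ 2) = real n * (real g - 1)"
proof -
  have cos_nz: "\<And>k. k \<in> {1..g} \<Longrightarrow> cos (alpha_angle g t k) \<noteq> 0"
    using cos_alpha_angle_pos[OF _ _ t] by force
  show ?thesis
  proof (cases "odd g")
    case True
    then have "g \<in> {1, 3}" and m2: "m2 = m1" using g odd by auto
    moreover have "n = m1 * g" using dim m2 by (simp add: algebra_simps)
    ultimately show ?thesis
      using weighted_tan_sq_sum_odd[OF _ m1 cos_nz] balanced by simp
  next
    case False
    then obtain h where gh: "g = 2 * h" and h: "h \<in> {1, 2, 3}" using g by auto
    have "n = (m1 + m2) * h" using dim gh by (simp add: algebra_simps)
    then show ?thesis
      using weighted_tan_sq_sum_even[OF h] cos_nz balanced by (simp add: gh)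
  qed
qed

lemma inner_rcis_cis: "rcis \<rho> t \<bullet> cis s = \<rho> * cos (t - s)"
  by (simp add: inner_complex_def cos_diff algebra_simps)

lemma shape_eig_rcis:
  "shape_eig g (rcis \<rho> t) \<xi> k = - (\<xi> \<bullet> alpha g k) / (\<rho> * cos (alpha_angle g t k))"
  unfolding shape_eig_def alpha_angle_def alpha_def[of g k] inner_rcis_cis
  by (simp add: inner_complex_def divide_simps)

lemma shape_eig_sphere_normal:
  assumes "\<rho> > 0"
  shows "shape_eig g (rcis \<rho> t) (sphere_normal (rcis \<rho> t)) k = tan (alpha_angle g t k) / \<rho>"
proof -
  have "sphere_normal (rcis \<rho> t) = rcis 1 (t + pi/2)"
    using assms by (simp add: sphere_normal_def complex_eq_iff cos_add sin_add)
  moreover have "t + pi/2 - (real k * pi / real g - pi / 2) = alpha_angle g t k + pi/2"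
    by (simp add: alpha_angle_def)
  ultimately have "sphere_normal (rcis \<rho> t) \<bullet> alpha g k = - sin (alpha_angle g t k)"
    by (simp add: alpha_def inner_rcis_cis cos_add)
  then show ?thesis by (simp add: shape_eig_rcis tan_def)
qed

lemma shape_eig_Basis_sq_sum:
  assumes "cos (alpha_angle g t k) \<noteq> 0"
  shows "(\<Sum>\<xi>\<in>Basis. shape_eig g (rcis \<rho> t) \<xi> k ^ 2) = (1 + tan (alpha_angle g t k) ^ 2) / \<rho> ^ 2"
proof -
  have "(\<Sum>\<xi>\<in>Basis. shape_eig g (rcis \<rho> t) \<xi> k ^ 2)
      = (\<Sum>\<xi>\<in>Basis. (\<xi> \<bullet> alpha g k) ^ 2) / (\<rho> * cos (alpha_angle g t k)) ^ 2"
    by (simp add: shape_eig_rcis power_divide sum_divide_distrib)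
  also have "\<dots> = 1 / (\<rho> * cos (alpha_angle g t k)) ^ 2"
    by (simp add: Basis_complex_def alpha_def)
  also have "\<dots> = (1 + tan (alpha_angle g t k) ^ 2) / \<rho> ^ 2"
    using assms sin_cos_squared_add[of "alpha_angle g t k"] by (simp add: tan_def field_simps)
  finally show ?thesis .
qed

lemma mean_curv_S_rcis_eq_0_iff:
  assumes "\<rho> > 0" and "dimM g m1 m2 \<noteq> 0"
  shows "mean_curv_S g m1 m2 (rcis \<rho> t) = 0
    \<longleftrightarrow> (\<Sum>k=1..g. real (mult m1 m2 k) * tan (alpha_angle g t k)) = 0"
proof -
  have "sphere_normal (rcis \<rho> t) \<noteq> 0" using assms(1) by (simp add: sphere_normal_def)
  moreover have "shape_trace g m1 m2 (rcis \<rho> t) (sphere_normal (rcis \<rho> t))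
      = (\<Sum>k=1..g. real (mult m1 m2 k) * tan (alpha_angle g t k)) / \<rho>"
    using assms(1) by (simp add: shape_trace_def shape_eig_sphere_normal sum_divide_distrib)
  ultimately show ?thesis
    unfolding mean_curv_S_def mult_eq_0_iff of_real_eq_0_iff using assms by simp
qed

lemma normsq_AS_rcis:
  assumes "\<rho> > 0"
  shows "normsq_AS g m1 m2 (rcis \<rho> t)
    = (\<Sum>k=1..g. real (mult m1 m2 k) * tan (alpha_angle g t k) ^ 2) / \<rho> ^ 2"
  using assms
  by (simp add: normsq_AS_def hs_sq_def shape_eig_sphere_normal power_divide sum_divide_distrib)

lemma normsq_AE_rcis:
  assumes "0 < t" "t < pi / real g"
  shows "normsq_AE g m1 m2 (rcis \<rho> t)
    = (real (dimM g m1 m2) + (\<Sum>k=1..g. real (mult m1 m2 k) * tan (alpha_angle g t k) ^ 2)) / \<rho> ^ 2"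
proof -
  have "normsq_AE g m1 m2 (rcis \<rho> t)
      = (\<Sum>k=1..g. real (mult m1 m2 k) * (\<Sum>\<xi>\<in>Basis. shape_eig g (rcis \<rho> t) \<xi> k ^ 2))"
    unfolding normsq_AE_def hs_sq_def by (simp add: sum.swap[of _ Basis] sum_distrib_left)
  also have "\<dots> = (\<Sum>k=1..g. real (mult m1 m2 k) * (1 + tan (alpha_angle g t k) ^ 2)) / \<rho> ^ 2"
    using cos_alpha_angle_pos[OF _ _ assms]
    by (simp add: shape_eig_Basis_sq_sum sum_divide_distrib less_imp_neq[symmetric])
  finally show ?thesis
    by (simp add: dimM_def distrib_left sum.distrib)
qed

theorem corollary4p8:
  fixes g m1 m2 n :: nat and r \<theta> :: real
  assumes "g \<in> {1, 2, 3, 4, 6}"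
    and "1 \<le> m1" and "m1 \<le> m2"
    and "odd g \<Longrightarrow> m1 = m2"
    and "(m1 + m2) * g = 2 * n"
    and "rcis r \<theta> \<in> weyl_chamber g"
    and "mean_curv_S g m1 m2 (rcis r \<theta>) = 0"
  shows "normsq_AE g m1 m2 (rcis r \<theta>) = real n * real g / r^2
       \<and> normsq_AS g m1 m2 (rcis r \<theta>) = real n / r^2 * (real g - 1)"
proof -
  obtain \<rho> t where x: "rcis r \<theta> = rcis \<rho> t" and \<rho>: "\<rho> > 0" and t: "0 < t" "t < pi / real g"
    using assms(6) unfolding weyl_chamber_def by auto
  have r: "r^2 = \<rho>^2" using arg_cong[OF x, of cmod] by (metis complex_mod_rcis power2_abs)
  have dim: "dimM g m1 m2 = n" using dimM_double[of g m1 m2, OF assms(4)] assms(5) by simp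
  have "n \<noteq> 0" using assms(1,2,5) by auto
  then have balanced: "(\<Sum>k=1..g. real (mult m1 m2 k) * tan (alpha_angle g t k)) = 0"
    using assms(7) mean_curv_S_rcis_eq_0_iff[OF \<rho>] by (simp add: x dim)
  have tan_sq: "(\<Sum>k=1..g. real (mult m1 m2 k) * tan (alpha_angle g t k) ^ 2) = real n * (real g - 1)"
    using weighted_tan_sq_sum[OF assms(1) _ assms(4,5) t balanced] assms(2) by simp
  have "normsq_AE g m1 m2 (rcis \<rho> t) = real n * real g / \<rho>^2"
    unfolding normsq_AE_rcis[OF t] tan_sq dim by (simp add: algebra_simps)
  moreover have "normsq_AS g m1 m2 (rcis \<rho> t) = real n / \<rho>^2 * (real g - 1)"
    unfolding normsq_AS_rcis[OF \<rho>] tan_sq by simp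
  ultimately show ?thesis unfolding x r ..
qed

end
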